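(* Let $\{c_n\}_{n\in\mathbb Z}$ be complex numbers such that $c_n+c_{-n}\in M(\theta_0)$ for all $n\ge1$ for some $\theta_0\in[0,\pi/2)$, and such that $\{c_n\}_{n\ge0}\in NBVS$. For $n\ge0$ put $S_n(x)=\sum_{k=-n}^{n}c_ke^{ikx}$. Then the following are equivalent: (i) $S_n(x)$ converges for every $x\in\mathbb R$ to a function $f$ which is continuous and $2\pi$-periodic, and $\lim_{n\to\infty}\|f-S_n\|=0$, where $\|g\|=\max_{x\in\mathbb R}|g(x)|$; (ii) $\lim_{n\to\infty}nc_n=0$ and $\sum_{n=1}^\infty|c_n+c_{-n}|<\infty$.
   Context: For $\theta_0\in[0,\pi/2)$ let $M(\theta_0)=\{z\in\mathbb C: |\arg z|\le\theta_0\}$ (with $0\in M(\theta_0)$). Write $\Delta c_n=c_n-c_{n+1}$. A complex sequence $\mathbf C=\{c_n\}$ belongs to $NBVS$ if there is $\theta_0\in[0,\pi/2)$ with $c_n\in M(\theta_0)$ for all $n\ge1$ and a constant $K(\mathbf C)>0$ (depending only on $\mathbf C$) such that $\sum_{n=m}^{2m}|\Delta c_n|\le K(\mathbf C)\big(|c_m|+|c_{2m}|\big)$ for all $m=1,2,\dots$. *)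

theory Defs
  imports "HOL-Analysis.Analysis"
begin

definition sectorM :: "real \<Rightarrow> complex set" where
  "sectorM \<theta>0 = {z. z = 0 \<or> \<bar>Arg z\<bar> \<le> \<theta>0}"

definition NBVS :: "(nat \<Rightarrow> complex) \<Rightarrow> bool" where
  "NBVS c \<longleftrightarrow>
     (\<exists>\<theta>0. 0 \<le> \<theta>0 \<and> \<theta>0 < pi/2 \<and> (\<forall>n\<ge>1. c n \<in> sectorM \<theta>0)) \<and>
     (\<exists>K>0. \<forall>m\<ge>1. (\<Sum>n=m..2*m. cmod (c n - c (Suc n))) \<le> K * (cmod (c m) + cmod (c (2*m))))"

definition partial_sum :: "(int \<Rightarrow> complex) \<Rightarrow> nat \<Rightarrow> real \<Rightarrow> complex" where
  "partial_sum c n x = (\<Sum>k\<in>{-int n..int n}. c k * exp (\<i> * of_int k * of_real x))"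

end

(*
  Put a k = c k + c (-k). Then the partial sums are
  S n x = (\<Sum>k\<le>n. a k e^(-ikx)) + 2i (\<Sum>k\<le>n. c k sin (kx)) - c 0.
  At x = 0 the sine part vanishes, and since the a k lie in a sector around the positive
  real axis, convergence of \<Sum> a k already forces \<Sum> |a k| < \<infinity>. Then the first series
  converges uniformly, so S n converges uniformly iff the sine series does.

  For a sequence of bounded dyadic variation (the NBVS condition) the sine series converges
  uniformly iff n c n \<rightarrow> 0. Sufficiency: split the sum at k \<approx> 1/|x|, estimate the low
  frequencies termwise by k |x| |c k| and the high ones by summation by parts, bounding the
  remaining variation by a geometric series of dyadic blocks. Necessity: at x = \<pi>/(4p) all
  sin (kx), p \<le> k \<le> 2p, are at least 1/2 and the sector condition rules out cancellation,
  so the block sums |c p| + ... + |c (2p)| tend to 0; bounded dyadic variation turns this into n c n \<rightarrow> 0.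

  Finally, for continuous 2\<pi>-periodic functions sup-norm convergence to a continuous periodic
  limit is the same as uniform convergence.
*)
theory Submission
  imports Defs "HOL-Library.Periodic_Fun"
begin

lemma sum_gp_atLeastLessThan:
  fixes z :: "'a::comm_ring_1"
  assumes "p \<le> q"
  shows "(1 - z) * (\<Sum>j=p..<q. z ^ j) = z ^ p - z ^ q"
  using assms
proof (induction q rule: dec_induct)
  case (step n)
  have "(1 - z) * (\<Sum>j=p..<Suc n. z ^ j) = (1 - z) * (\<Sum>j=p..<n. z ^ j) + (1 - z) * z ^ n"
    using step.hyps by (simp add: distrib_left)
  also have "\<dots> = z ^ p - z ^ Suc n"
    unfolding step.IH by (simp add: algebra_simps)
  finally show ?case .
qed simp

lemma norm_sum_power_le:
  fixes z :: complex
  assumes "cmod z = 1" "z \<noteq> 1"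
  shows "cmod (\<Sum>j=p..<q. z ^ j) \<le> 2 / cmod (1 - z)"
proof (cases "p \<le> q")
  case True
  have "cmod (1 - z) * cmod (\<Sum>j=p..<q. z ^ j) = cmod (z ^ p - z ^ q)"
    by (metis norm_mult sum_gp_atLeastLessThan[OF True])
  also have "\<dots> \<le> 2"
    using norm_triangle_ineq4[of "z ^ p" "z ^ q"] assms(1) by (simp add: norm_power)
  finally show ?thesis
    using assms by (simp add: field_simps)
qed simp

lemma sum_by_parts:
  fixes b g :: "nat \<Rightarrow> 'a::comm_ring"
  assumes "p \<le> n"
  shows "(\<Sum>k=p..<n. b k * g k) =
    b n * (\<Sum>j=p..<n. g j) + (\<Sum>k=p..<n. (b k - b (Suc k)) * (\<Sum>j=p..<Suc k. g j))"
  using assms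
proof (induction n rule: dec_induct)
  case (step n)
  then show ?case by (simp add: algebra_simps)
qed simp

lemma norm_sum_by_parts_le:
  fixes b g :: "nat \<Rightarrow> complex"
  assumes G: "\<And>k. cmod (\<Sum>j=p..<k. g j) \<le> B"
  shows "cmod (\<Sum>k=p..<n. b k * g k) \<le> B * (cmod (b n) + (\<Sum>k=p..<n. cmod (b k - b (Suc k))))"
proof (cases "p \<le> n")
  case False
  moreover have "0 \<le> B" using G[of p] by simp
  ultimately show ?thesis by (simp add: sum_nonneg)
next
  case True
  have "cmod (\<Sum>k=p..<n. b k * g k) \<le> cmod (b n * (\<Sum>j=p..<n. g j))
      + cmod (\<Sum>k=p..<n. (b k - b (Suc k)) * (\<Sum>j=p..<Suc k. g j))"
    by (subst sum_by_parts[OF True]) (rule norm_triangle_ineq)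
  also have "\<dots> \<le> cmod (b n) * B + (\<Sum>k=p..<n. cmod (b k - b (Suc k)) * B)"
  proof (rule add_mono)
    show "cmod (b n * (\<Sum>j=p..<n. g j)) \<le> cmod (b n) * B"
      unfolding norm_mult using G by (rule mult_left_mono) simp
    show "cmod (\<Sum>k=p..<n. (b k - b (Suc k)) * (\<Sum>j=p..<Suc k. g j)) \<le> (\<Sum>k=p..<n. cmod (b k - b (Suc k)) * B)"
      by (rule order_trans[OF norm_sum sum_mono]) (simp only: norm_mult mult_left_mono[OF G norm_ge_zero])
  qed
  finally show ?thesis by (simp add: distrib_left sum_distrib_left mult_ac)
qed

lemma sectorM_Re_ge:
  assumes "0 \<le> \<theta>" "\<theta> < pi/2" "z \<in> sectorM \<theta>"
  shows "cos \<theta> * cmod z \<le> Re z"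
proof (cases "z = 0")
  case False
  then have "\<bar>Arg z\<bar> \<le> \<theta>" using assms by (simp add: sectorM_def)
  then have "cos \<theta> \<le> cos \<bar>Arg z\<bar>"
    using assms by (intro cos_monotone_0_pi_le) auto
  also have "\<dots> = Re z / cmod z" using False by (simp add: cos_Arg)
  finally show ?thesis using False by (simp add: field_simps)
qed simp

lemma summable_norm_if_Re_ge:
  fixes a :: "nat \<Rightarrow> complex"
  assumes "\<delta> > 0" "\<And>k. \<delta> * cmod (a k) \<le> Re (a k)" "summable a"
  shows "summable (\<lambda>k. cmod (a k))"
proof (rule summable_comparison_test)
  show "\<exists>N. \<forall>k\<ge>N. norm (cmod (a k)) \<le> Re (a k) / \<delta>"
  proof (intro exI allI impI)
    fix k
    show "norm (cmod (a k)) \<le> Re (a k) / \<delta>"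
      using assms(2)[of k] assms(1) by (simp add: pos_le_divide_eq mult.commute)
  qed
  show "summable (\<lambda>k. Re (a k) / \<delta>)"
    by (intro summable_divide summable_Re assms(3))
qed

section \<open>Sequences of bounded dyadic variation\<close>

lemma norm_diff_le_variation:
  fixes b :: "nat \<Rightarrow> 'a::real_normed_vector"
  assumes "m \<le> n"
  shows "norm (b m - b n) \<le> (\<Sum>k=m..<n. norm (b k - b (Suc k)))"
proof -
  have "b m - b n = (\<Sum>k=m..<n. b k - b (Suc k))"
    using sum_Suc_diff'[OF assms, of "\<lambda>k. - b k"] by simp
  then show ?thesis by (simp add: norm_sum)
qed

lemma mult_norm_bound_nonneg:
  fixes b :: "nat \<Rightarrow> 'a::real_normed_vector"
  shows "\<forall>k\<ge>N. real k * norm (b k) \<le> e \<Longrightarrow> 0 \<le> e"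
  by (meson mult_nonneg_nonneg norm_ge_zero of_nat_0_le_iff order_trans order_refl)

definition dyadic_variation_le :: "real \<Rightarrow> (nat \<Rightarrow> 'a::real_normed_vector) \<Rightarrow> bool" where
  "dyadic_variation_le K b \<longleftrightarrow>
     (\<forall>m\<ge>1. (\<Sum>n=m..2*m. norm (b n - b (Suc n))) \<le> K * (norm (b m) + norm (b (2*m))))"

lemma dyadic_variation_leD:
  "dyadic_variation_le K b \<Longrightarrow> 1 \<le> m \<Longrightarrow>
     (\<Sum>n=m..2*m. norm (b n - b (Suc n))) \<le> K * (norm (b m) + norm (b (2*m)))"
  by (simp add: dyadic_variation_le_def)

lemma dyadic_block_variation_le:
  fixes b :: "nat \<Rightarrow> 'a::real_normed_vector"
  assumes K: "dyadic_variation_le K b" "0 \<le> K"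
    and e: "\<forall>k\<ge>N. real k * norm (b k) \<le> e" and "1 \<le> N" "N \<le> p"
  shows "(\<Sum>k=p..<2*p. norm (b k - b (Suc k))) \<le> 2 * K * e / p"
proof -
  have p: "1 \<le> p" using \<open>1 \<le> N\<close> \<open>N \<le> p\<close> by simp
  have "real p * norm (b p) \<le> e" "real (2*p) * norm (b (2*p)) \<le> e"
    using e[rule_format, of p] e[rule_format, of "2*p"] \<open>N \<le> p\<close> by auto
  then have bounds: "norm (b p) \<le> e / p" "norm (b (2*p)) \<le> e / (2*p)"
    using p by (simp_all add: field_simps)
  have "(\<Sum>k=p..<2*p. norm (b k - b (Suc k))) \<le> (\<Sum>k=p..2*p. norm (b k - b (Suc k)))"
    by (intro sum_mono2) auto
  also have "\<dots> \<le> K * (norm (b p) + norm (b (2*p)))"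
    using dyadic_variation_leD[OF K(1) p] .
  also have "\<dots> \<le> K * (e/p + e/(2*p))"
    using bounds K(2) by (intro mult_left_mono) auto
  also have "\<dots> \<le> 2 * K * e / p"
    using K(2) mult_norm_bound_nonneg[OF e] p by (simp add: field_simps)
  finally show ?thesis .
qed

text \<open>Splitting \<open>[p, q)\<close> into dyadic blocks \<open>[p, 2p], [2p, 4p], \<dots>\<close> gives a geometric series.\<close>
lemma variation_tail_le:
  fixes b :: "nat \<Rightarrow> 'a::real_normed_vector"
  assumes K: "dyadic_variation_le K b" "0 \<le> K"
    and e: "\<forall>k\<ge>N. real k * norm (b k) \<le> e" and "1 \<le> N" "N \<le> p"
  shows "(\<Sum>k=p..<q. norm (b k - b (Suc k))) \<le> 4 * K * e / p"
  using \<open>N \<le> p\<close>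
proof (induction "q - p" arbitrary: p rule: less_induct)
  case less
  have p: "1 \<le> p" using less.prems \<open>1 \<le> N\<close> by simp
  have "0 \<le> e"
    using e by (rule mult_norm_bound_nonneg)
  have block: "(\<Sum>k=p..<2*p. norm (b k - b (Suc k))) \<le> 2 * K * e / p"
    using dyadic_block_variation_le[OF K e \<open>1 \<le> N\<close> less.prems] .
  show ?case
  proof (cases "q \<le> 2*p")
    case True
    then have "(\<Sum>k=p..<q. norm (b k - b (Suc k))) \<le> (\<Sum>k=p..<2*p. norm (b k - b (Suc k)))"
      by (intro sum_mono2) auto
    also have "\<dots> \<le> 2 * K * e / p"
      by (rule block)
    also have "\<dots> \<le> 4 * K * e / p"
      using K(2) \<open>0 \<le> e\<close> by (intro divide_right_mono mult_right_mono) auto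
    finally show ?thesis .
  next
    case False
    then have "(\<Sum>k=p..<q. norm (b k - b (Suc k))) =
        (\<Sum>k=p..<2*p. norm (b k - b (Suc k))) + (\<Sum>k=2*p..<q. norm (b k - b (Suc k)))"
      by (intro sum.atLeastLessThan_concat[symmetric]) auto
    moreover have "(\<Sum>k=2*p..<q. norm (b k - b (Suc k))) \<le> 4 * K * e / (2*p)"
      using less.hyps[of "2*p"] False p less.prems by (simp add: of_nat_mult)
    moreover have "4 * K * e / (2*p) = 2 * K * e / p"
      using p by (simp add: field_simps)
    ultimately show ?thesis using block by linarith
  qed
qed

lemma norm_le_dyadic_endpoints:
  fixes b :: "nat \<Rightarrow> 'a::real_normed_vector"
  assumes K: "dyadic_variation_le K b" and m: "1 \<le> m" "m \<le> n" "n \<le> 2*m"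
  shows "norm (b n) \<le> (K + 1) * (norm (b m) + norm (b (2*m)))"
proof -
  have "norm (b m - b n) \<le> (\<Sum>k=m..<n. norm (b k - b (Suc k)))"
    using m by (intro norm_diff_le_variation) simp
  also have "\<dots> \<le> (\<Sum>k=m..2*m. norm (b k - b (Suc k)))"
    using m by (intro sum_mono2) auto
  also have "\<dots> \<le> K * (norm (b m) + norm (b (2*m)))"
    using dyadic_variation_leD[OF K m(1)] .
  moreover have "norm (b n) \<le> norm (b m) + norm (b m - b n)"
    using norm_triangle_ineq4[of "b m" "b m - b n"] by simp
  ultimately have "norm (b n) \<le> norm (b m) + K * (norm (b m) + norm (b (2*m)))"
    by linarith
  also have "\<dots> \<le> (K + 1) * (norm (b m) + norm (b (2*m)))"
    by (simp add: algebra_simps)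
  finally show ?thesis .
qed

text \<open>Average \<open>norm_le_dyadic_endpoints\<close> over the \<open>n/2\<close> indices \<open>m \<in> [\<lceil>n/2\<rceil>, n]\<close>.\<close>
lemma mult_norm_le_block_sums:
  fixes b :: "nat \<Rightarrow> 'a::real_normed_vector"
  assumes K: "dyadic_variation_le K b" "0 \<le> K" and "1 \<le> n"
  defines "h \<equiv> Suc n div 2"
  shows "real n * norm (b n) \<le>
    2 * (K + 1) * ((\<Sum>k=h..2*h. norm (b k)) + (\<Sum>k=n..2*n. norm (b k)))"
proof -
  have h: "1 \<le> h" "h \<le> n" "n \<le> 2*h" "2*h \<le> Suc n" unfolding h_def using \<open>1 \<le> n\<close> by presburger+
  have each: "norm (b n) \<le> (K + 1) * (norm (b m) + norm (b (2*m)))" if "m \<in> {h..n}" for m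
    using that h by (intro norm_le_dyadic_endpoints[OF K(1)]) auto
  have "real (card {h..n}) * norm (b n) = (\<Sum>m=h..n. norm (b n))"
    by simp
  also have "\<dots> \<le> (\<Sum>m=h..n. (K + 1) * (norm (b m) + norm (b (2*m))))"
    by (rule sum_mono) (rule each)
  also have "\<dots> = (K + 1) * ((\<Sum>m=h..n. norm (b m)) + (\<Sum>m\<in>(\<lambda>m. 2*m) ` {h..n}. norm (b m)))"
    by (simp add: sum.distrib sum.reindex inj_on_def flip: sum_distrib_left)
  also have "\<dots> \<le> (K + 1) * ((\<Sum>k=h..2*h. norm (b k)) + (\<Sum>k=n..2*n. norm (b k)))"
    using h K(2) by (intro mult_left_mono add_mono sum_mono2) auto
  finally have avg: "real (card {h..n}) * norm (b n) \<le> \<dots>" .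
  have "real n \<le> 2 * real (card {h..n})"
    using h by simp
  then have "real n * norm (b n) \<le> 2 * (real (card {h..n}) * norm (b n))"
    using mult_right_mono[OF _ norm_ge_zero] by (metis mult.assoc)
  also have "\<dots> \<le> 2 * ((K + 1) * ((\<Sum>k=h..2*h. norm (b k)) + (\<Sum>k=n..2*n. norm (b k))))"
    using avg by simp
  finally show ?thesis
    by (simp only: mult.assoc)
qed

lemma tendsto_mult_zero_if_block_sums:
  fixes b :: "nat \<Rightarrow> 'a::real_normed_vector"
  assumes K: "dyadic_variation_le K b" "0 \<le> K"
    and blocks: "(\<lambda>p. \<Sum>k=p..2*p. norm (b k)) \<longlonglongrightarrow> 0"
  shows "(\<lambda>n. of_nat n *\<^sub>R b n) \<longlonglongrightarrow> 0"
proof (rule Lim_null_comparison)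
  let ?\<beta> = "\<lambda>p. \<Sum>k=p..2*p. norm (b k)"
  have "filterlim (\<lambda>n::nat. Suc n div 2) sequentially sequentially"
    unfolding filterlim_at_top eventually_sequentially by (metis div_le_mono nonzero_mult_div_cancel_left le_Suc_eq zero_neq_numeral)
  then have "(\<lambda>n. ?\<beta> (Suc n div 2)) \<longlonglongrightarrow> 0"
    by (rule filterlim_compose[OF blocks])
  then show "(\<lambda>n. 2 * (K + 1) * (?\<beta> (Suc n div 2) + ?\<beta> n)) \<longlonglongrightarrow> 0"
    using blocks by (auto intro!: tendsto_eq_intros)
  show "\<forall>\<^sub>F n in sequentially. norm (of_nat n *\<^sub>R b n) \<le> 2 * (K + 1) * (?\<beta> (Suc n div 2) + ?\<beta> n)"
    using mult_norm_le_block_sums[OF K] by (auto simp: eventually_sequentially intro!: exI[of _ 1])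
qed

section \<open>Uniform convergence of sine series\<close>

lemma norm_one_minus_cnj: "cmod (1 - cnj z) = cmod (1 - z)"
  by (metis complex_cnj_diff complex_cnj_one complex_mod_cnj)

lemma norm_sub_cnj_le: "cmod (z - cnj z) \<le> 2 * cmod (1 - z)"
proof -
  have "cmod (z - cnj z) \<le> cmod (z - 1) + cmod (1 - cnj z)"
    using norm_triangle_ineq[of "z - 1" "1 - cnj z"] by simp
  then show ?thesis
    by (simp add: norm_one_minus_cnj norm_minus_commute)
qed

lemma norm_sum_low_frequencies_le:
  fixes b :: "nat \<Rightarrow> complex"
  assumes z: "cmod z = 1" and A: "A \<subseteq> {1..M}" and M: "real M * cmod (1 - z) \<le> 1"
    and b: "\<And>k. k \<in> A \<Longrightarrow> real k * cmod (b k) \<le> \<delta>" and "0 \<le> \<delta>"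
  shows "cmod (\<Sum>k\<in>A. b k * (z ^ k - cnj z ^ k)) \<le> 2 * \<delta>"
proof -
  let ?d = "cmod (1 - z)"
  have each: "cmod (b k * (z ^ k - cnj z ^ k)) \<le> 2 * ?d * \<delta>" if "k \<in> A" for k
  proof -
    have "cmod (z ^ k - cnj z ^ k) \<le> real k * cmod (z - cnj z)"
      using z by (intro norm_power_diff) auto
    also have "\<dots> \<le> real k * (2 * ?d)"
      by (intro mult_left_mono norm_sub_cnj_le) simp
    finally have "cmod (b k * (z ^ k - cnj z ^ k)) \<le> cmod (b k) * (real k * (2 * ?d))"
      unfolding norm_mult by (rule mult_left_mono) simp
    also have "\<dots> = 2 * ?d * (real k * cmod (b k))"
      by simp
    also have "\<dots> \<le> 2 * ?d * \<delta>"
      using b[OF that] by (intro mult_left_mono) auto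
    finally show ?thesis .
  qed
  have "card A \<le> M"
    using card_mono[OF _ A] by simp
  have "cmod (\<Sum>k\<in>A. b k * (z ^ k - cnj z ^ k)) \<le> real (card A) * (2 * ?d * \<delta>)"
    using each by (intro order_trans[OF norm_sum sum_bounded_above]) auto
  also have "\<dots> \<le> real M * (2 * ?d * \<delta>)"
    using \<open>card A \<le> M\<close> \<open>0 \<le> \<delta>\<close> by (intro mult_right_mono) auto
  also have "\<dots> = 2 * \<delta> * (real M * ?d)"
    by simp
  also have "\<dots> \<le> 2 * \<delta>"
    using M \<open>0 \<le> \<delta>\<close> by (simp add: mult_left_le)
  finally show ?thesis .
qed

lemma norm_sum_high_frequencies_le:
  fixes b :: "nat \<Rightarrow> complex"
  assumes K: "dyadic_variation_le K b" "0 \<le> K"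
    and e: "\<forall>k\<ge>N. real k * cmod (b k) \<le> \<delta>" and "1 \<le> N" "N \<le> p"
    and u: "cmod u = 1" "u \<noteq> 1" "1 \<le> real p * cmod (1 - u)"
  shows "cmod (\<Sum>k=p..<n. b k * u ^ k) \<le> 2 * (1 + 4 * K) * \<delta>"
proof -
  have "0 \<le> \<delta>"
    using e by (rule mult_norm_bound_nonneg)
  show ?thesis
  proof (cases "p \<le> n")
    case False
    with \<open>0 \<le> \<delta>\<close> K(2) show ?thesis by simp
  next
    case True
    let ?d = "cmod (1 - u)"
    have p: "1 \<le> p" using \<open>1 \<le> N\<close> \<open>N \<le> p\<close> by simp
    have d: "0 < ?d" using u by simp
    have "real n * cmod (b n) \<le> \<delta>"
      using e True \<open>N \<le> p\<close> by simp
    then have "cmod (b n) \<le> \<delta> / n"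
      using True p by (simp add: field_simps mult.commute)
    also have "\<dots> \<le> \<delta> / p"
      using True p \<open>0 \<le> \<delta>\<close> by (intro divide_left_mono) auto
    finally have bn: "cmod (b n) \<le> \<delta> / p" .
    have "cmod (\<Sum>k=p..<n. b k * u ^ k) \<le> 2 / ?d * (cmod (b n) + (\<Sum>k=p..<n. cmod (b k - b (Suc k))))"
      by (rule norm_sum_by_parts_le) (rule norm_sum_power_le[OF u(1,2)])
    also have "\<dots> \<le> 2 / ?d * (\<delta> / p + 4 * K * \<delta> / p)"
      using bn variation_tail_le[OF K e \<open>1 \<le> N\<close> \<open>N \<le> p\<close>] d by (intro mult_left_mono add_mono) auto
    also have "\<dots> = 2 * (1 + 4 * K) * \<delta> / (real p * ?d)"
      using p d by (simp add: field_simps)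
    also have "\<dots> \<le> 2 * (1 + 4 * K) * \<delta> / 1"
      using u(3) K(2) \<open>0 \<le> \<delta>\<close> by (intro divide_left_mono) auto
    finally show ?thesis by simp
  qed
qed

lemma norm_sum_high_frequencies_sine_le:
  fixes b :: "nat \<Rightarrow> complex"
  assumes K: "dyadic_variation_le K b" "0 \<le> K"
    and e: "\<forall>k\<ge>N. real k * cmod (b k) \<le> \<delta>" and "1 \<le> N" "N \<le> p"
    and u: "cmod u = 1" "u \<noteq> 1" "1 \<le> real p * cmod (1 - u)"
  shows "cmod (\<Sum>k=p..<n. b k * (u ^ k - cnj u ^ k)) \<le> 4 * (1 + 4 * K) * \<delta>"
proof -
  have "cmod (\<Sum>k=p..<n. b k * u ^ k) \<le> 2 * (1 + 4 * K) * \<delta>"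
    by (rule norm_sum_high_frequencies_le[OF K e \<open>1 \<le> N\<close> \<open>N \<le> p\<close> u])
  moreover have "cmod (\<Sum>k=p..<n. b k * cnj u ^ k) \<le> 2 * (1 + 4 * K) * \<delta>"
    using u by (intro norm_sum_high_frequencies_le[OF K e \<open>1 \<le> N\<close> \<open>N \<le> p\<close>])
      (auto simp: norm_one_minus_cnj)
  moreover have "cmod (\<Sum>k=p..<n. b k * (u ^ k - cnj u ^ k))
      \<le> cmod (\<Sum>k=p..<n. b k * u ^ k) + cmod (\<Sum>k=p..<n. b k * cnj u ^ k)"
    unfolding right_diff_distrib sum_subtractf by (rule norm_triangle_ineq4)
  ultimately show ?thesis
    by linarith
qed

text \<open>Below \<open>M \<approx> 1 / cmod (1 - z)\<close> the terms are estimated one by one, above it by parts.\<close>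
lemma norm_sine_block_le:
  fixes b :: "nat \<Rightarrow> complex"
  assumes K: "dyadic_variation_le K b" "0 \<le> K"
    and e: "\<forall>k\<ge>N. real k * cmod (b k) \<le> \<delta>" and "1 \<le> N" "N \<le> m"
    and z: "cmod z = 1"
  shows "cmod (\<Sum>k=m..<n. b k * (z ^ k - cnj z ^ k)) \<le> (6 + 16 * K) * \<delta>"
proof (cases "z = 1")
  case True
  then show ?thesis
    using K(2) mult_norm_bound_nonneg[OF e] by simp
next
  case False
  define d where "d = cmod (1 - z)"
  define M where "M = nat \<lfloor>1 / d\<rfloor>"
  define p where "p = max m (Suc M)"
  have d: "0 < d" using False by (simp add: d_def)
  have "real M \<le> 1 / d" "1 / d \<le> real (Suc M)"
    using d by (simp_all add: M_def) linarith+
  then have "real M * d \<le> 1" "1 \<le> real (Suc M) * d"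
    using d by (simp_all add: field_simps)
  moreover have "real (Suc M) * d \<le> real p * d"
    using d by (intro mult_right_mono) (auto simp: p_def)
  ultimately have "real M * d \<le> 1" "1 \<le> real p * d"
    by linarith+
  have "0 \<le> \<delta>"
    using e by (rule mult_norm_bound_nonneg)
  let ?f = "\<lambda>k. b k * (z ^ k - cnj z ^ k)"
  have split: "{m..<n} = ({m..<n} \<inter> {..M}) \<union> {p..<n}"
    by (auto simp: p_def)
  have "(\<Sum>k=m..<n. ?f k) = (\<Sum>k\<in>{m..<n} \<inter> {..M}. ?f k) + (\<Sum>k=p..<n. ?f k)"
    by (subst split, rule sum.union_disjoint) (auto simp: p_def)
  then have "cmod (\<Sum>k=m..<n. ?f k) \<le> cmod (\<Sum>k\<in>{m..<n} \<inter> {..M}. ?f k) + cmod (\<Sum>k=p..<n. ?f k)"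
    by (simp only: norm_triangle_ineq)
  moreover have "cmod (\<Sum>k\<in>{m..<n} \<inter> {..M}. ?f k) \<le> 2 * \<delta>"
    using \<open>real M * d \<le> 1\<close> e \<open>1 \<le> N\<close> \<open>N \<le> m\<close> z \<open>0 \<le> \<delta>\<close>
    by (intro norm_sum_low_frequencies_le) (auto simp: d_def)
  moreover have "cmod (\<Sum>k=p..<n. ?f k) \<le> 4 * (1 + 4 * K) * \<delta>"
    using False z \<open>1 \<le> real p * d\<close> \<open>N \<le> m\<close>
    by (intro norm_sum_high_frequencies_sine_le[OF K e \<open>1 \<le> N\<close>]) (auto simp: p_def d_def)
  ultimately show ?thesis
    by (simp add: algebra_simps)
qed

lemma uniformly_convergent_sine_series:
  fixes b :: "nat \<Rightarrow> complex"
  assumes K: "dyadic_variation_le K b" "0 \<le> K"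
    and lim: "(\<lambda>n. of_nat n * b n) \<longlonglongrightarrow> 0"
  shows "uniformly_convergent_on (sphere 0 1) (\<lambda>n z. \<Sum>k<n. b k * (z ^ k - cnj z ^ k))"
  unfolding uniformly_convergent_on_sum_iff
proof (intro allI impI)
  fix \<epsilon> :: real
  assume "0 < \<epsilon>"
  define \<delta> where "\<delta> = \<epsilon> / (7 + 16 * K)"
  have "0 < \<delta>" "(6 + 16 * K) * \<delta> < \<epsilon>"
    using \<open>0 < \<epsilon>\<close> K(2) by (simp_all add: \<delta>_def field_simps)
  obtain N0 where N0: "\<And>k. N0 \<le> k \<Longrightarrow> cmod (of_nat k * b k - 0) < \<delta>"
    using LIMSEQ_D[OF lim \<open>0 < \<delta>\<close>] by blast
  define N where "N = max N0 1"
  have e: "\<forall>k\<ge>N. real k * cmod (b k) \<le> \<delta>"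
    using N0 by (auto simp: N_def norm_mult less_imp_le)
  have "cmod (\<Sum>k=m..<n. b k * (z ^ k - cnj z ^ k)) < \<epsilon>" if "N \<le> m" "cmod z = 1" for m n z
  proof -
    have "cmod (\<Sum>k=m..<n. b k * (z ^ k - cnj z ^ k)) \<le> (6 + 16 * K) * \<delta>"
      by (rule norm_sine_block_le[OF K e _ that]) (simp add: N_def)
    with \<open>(6 + 16 * K) * \<delta> < \<epsilon>\<close> show ?thesis by linarith
  qed
  then show "\<exists>N. \<forall>m n z. N \<le> m \<longrightarrow> m \<le> n \<longrightarrow> z \<in> sphere 0 1 \<longrightarrow>
      norm (\<Sum>k=m..<n. b k * (z ^ k - cnj z ^ k)) < \<epsilon>"
    by auto
qed

lemma cis_pow_diff_cnj: "cis x ^ k - cnj (cis x) ^ k = 2 * \<i> * complex_of_real (sin (real k * x))"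
  unfolding cis_cnj Complex.DeMoivre by (simp add: complex_eq_iff)

text \<open>On \<open>[p, 2p]\<close> the sines \<open>sin (k \<pi> / (4p))\<close> are at least \<open>1/2\<close>, and the sector condition
  prevents cancellation among the \<open>b k\<close>.\<close>
lemma block_le_norm_sine_sum:
  fixes b :: "nat \<Rightarrow> complex"
  assumes "0 \<le> \<delta>" and sector: "\<forall>k\<ge>1. \<delta> * cmod (b k) \<le> Re (b k)" and "1 \<le> p"
  defines "z \<equiv> cis (pi / (4 * p))"
  shows "\<delta> * (\<Sum>k=p..2*p. cmod (b k)) \<le> cmod (\<Sum>k=p..2*p. b k * (z ^ k - cnj z ^ k))"
proof -
  define x where "x = pi / (4 * p)"
  have sin: "1/2 \<le> sin (real k * x)" if "k \<in> {p..2*p}" for k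
  proof -
    have "0 \<le> x" by (simp add: x_def)
    then have "real p * x \<le> real k * x" "real k * x \<le> real (2*p) * x"
      using that by (auto intro!: mult_right_mono)
    moreover have "real p * x = pi/4" "real (2*p) * x = pi/2"
      using \<open>1 \<le> p\<close> by (simp_all add: x_def)
    ultimately have "sin (pi/6) \<le> sin (real k * x)"
      by (intro sin_monotone_2pi_le) auto
    then show ?thesis by (simp add: sin_30)
  qed
  have "\<delta> * (\<Sum>k=p..2*p. cmod (b k)) \<le> 2 * (\<Sum>k=p..2*p. Re (b k) * sin (real k * x))"
    unfolding sum_distrib_left
  proof (rule sum_mono)
    fix k assume k: "k \<in> {p..2*p}"
    then have "\<delta> * cmod (b k) \<le> Re (b k)"
      using sector \<open>1 \<le> p\<close> by auto
    moreover have "0 \<le> Re (b k)"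
      using \<open>\<delta> * cmod (b k) \<le> Re (b k)\<close> \<open>0 \<le> \<delta>\<close> by (metis mult_nonneg_nonneg norm_ge_zero order_trans)
    then have "Re (b k) * (1/2) \<le> Re (b k) * sin (real k * x)"
      by (rule mult_left_mono[OF sin[OF k]])
    ultimately show "\<delta> * cmod (b k) \<le> 2 * (Re (b k) * sin (real k * x))"
      by linarith
  qed
  also have "\<dots> = 2 * Re (\<Sum>k=p..2*p. b k * sin (real k * x))"
    by (simp add: Re_sum)
  also have "\<dots> \<le> cmod (2 * \<i> * (\<Sum>k=p..2*p. b k * sin (real k * x)))"
    using complex_Re_le_cmod[of "\<Sum>k=p..2*p. b k * sin (real k * x)"] by (simp add: norm_mult)
  also have "2 * \<i> * (\<Sum>k=p..2*p. b k * sin (real k * x)) = (\<Sum>k=p..2*p. b k * (z ^ k - cnj z ^ k))"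
    unfolding z_def cis_pow_diff_cnj by (simp add: x_def sum_distrib_left mult_ac)
  finally show ?thesis .
qed

lemma tendsto_mult_zero_if_uniformly_convergent_sine_series:
  fixes b :: "nat \<Rightarrow> complex"
  assumes K: "dyadic_variation_le K b" "0 \<le> K"
    and "0 < \<delta>" and sector: "\<forall>k\<ge>1. \<delta> * cmod (b k) \<le> Re (b k)"
    and conv: "uniformly_convergent_on (sphere 0 1) (\<lambda>n z. \<Sum>k<n. b k * (z ^ k - cnj z ^ k))"
  shows "(\<lambda>n. of_nat n * b n) \<longlonglongrightarrow> 0"
proof -
  have "(\<lambda>p. \<Sum>k=p..2*p. cmod (b k)) \<longlonglongrightarrow> 0"
  proof (rule LIMSEQ_I)
    fix \<epsilon> :: real
    assume "0 < \<epsilon>"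
    then obtain N where N: "\<And>m n z. N \<le> m \<Longrightarrow> m \<le> n \<Longrightarrow> z \<in> sphere 0 1 \<Longrightarrow>
        cmod (\<Sum>k=m..<n. b k * (z ^ k - cnj z ^ k)) < \<delta> * \<epsilon>"
      using uniformly_convergent_on_sum_E[OF conv] \<open>0 < \<delta>\<close> by (metis mult_pos_pos)
    have "\<delta> * (\<Sum>k=p..2*p. cmod (b k)) < \<delta> * \<epsilon>" if "max N 1 \<le> p" for p
      using block_le_norm_sine_sum[OF less_imp_le[OF \<open>0 < \<delta>\<close>] sector, of p]
        N[of p "Suc (2*p)" "cis (pi / (4 * p))"] that
      by (simp add: atLeastLessThanSuc_atLeastAtMost)
    then show "\<exists>N. \<forall>p\<ge>N. norm ((\<Sum>k=p..2*p. cmod (b k)) - 0) < \<epsilon>"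
      using \<open>0 < \<delta>\<close> by (intro exI[of _ "max N 1"]) (auto simp: sum_nonneg)
  qed
  then have "(\<lambda>n. of_nat n *\<^sub>R b n) \<longlonglongrightarrow> 0"
    by (rule tendsto_mult_zero_if_block_sums[OF K])
  then show ?thesis
    by (simp add: scaleR_conv_of_real)
qed

lemma NBVS_E:
  assumes "NBVS b"
  obtains \<delta> K where "0 < \<delta>" "\<forall>k\<ge>1. \<delta> * cmod (b k) \<le> Re (b k)" "0 \<le> K" "dyadic_variation_le K b"
proof -
  obtain \<theta> K where \<theta>: "0 \<le> \<theta>" "\<theta> < pi/2" "\<forall>k\<ge>1. b k \<in> sectorM \<theta>" and "0 < K"
    and "dyadic_variation_le K b"
    using assms by (auto simp: NBVS_def dyadic_variation_le_def)
  moreover have "0 < cos \<theta>"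
    using \<theta> by (intro cos_gt_zero_pi) auto
  ultimately show thesis
    using sectorM_Re_ge[OF \<theta>(1,2)] that[of "cos \<theta>" K] by auto
qed

lemma NBVS_uniformly_convergent_sine_series_iff:
  assumes "NBVS b"
  shows "uniformly_convergent_on (sphere 0 1) (\<lambda>n z. \<Sum>k<n. b k * (z ^ k - cnj z ^ k))
    \<longleftrightarrow> (\<lambda>n. of_nat n * b n) \<longlonglongrightarrow> 0"
proof -
  obtain \<delta> K where "0 < \<delta>" "\<forall>k\<ge>1. \<delta> * cmod (b k) \<le> Re (b k)"
    and K: "dyadic_variation_le K b" "0 \<le> K"
    using NBVS_E[OF assms] by metis
  then show ?thesis
    using uniformly_convergent_sine_series[OF K] tendsto_mult_zero_if_uniformly_convergent_sine_series[OF K]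
    by blast
qed

section \<open>Uniform convergence\<close>

lemma uniformly_convergent_on_image_iff:
  fixes f :: "nat \<Rightarrow> 'a \<Rightarrow> 'b::complete_space"
  shows "uniformly_convergent_on (g ` X) f \<longleftrightarrow> uniformly_convergent_on X (\<lambda>n x. f n (g x))"
  unfolding uniformly_convergent_eq_Cauchy uniformly_Cauchy_on_def by simp

lemma uniformly_convergent_on_Suc_iff:
  "uniformly_convergent_on X (\<lambda>n. f (Suc n)) \<longleftrightarrow> uniformly_convergent_on X f"
  unfolding uniformly_convergent_on_def filterlim_sequentially_Suc ..

lemma uniformly_convergent_on_diff_const_iff:
  fixes f :: "nat \<Rightarrow> 'a \<Rightarrow> 'b::banach"
  shows "uniformly_convergent_on X (\<lambda>n x. f n x - c) \<longleftrightarrow> uniformly_convergent_on X f"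
  unfolding uniformly_convergent_eq_Cauchy uniformly_Cauchy_on_def by (simp add: dist_norm)

lemma uniformly_convergent_on_add:
  fixes f g :: "nat \<Rightarrow> 'a \<Rightarrow> 'b::real_normed_vector"
  assumes "uniformly_convergent_on X f" "uniformly_convergent_on X g"
  shows "uniformly_convergent_on X (\<lambda>n x. f n x + g n x)"
  using assms uniform_limit_add unfolding uniformly_convergent_on_def by blast

lemma uniformly_convergent_on_diff:
  fixes f g :: "nat \<Rightarrow> 'a \<Rightarrow> 'b::real_normed_vector"
  assumes "uniformly_convergent_on X f" "uniformly_convergent_on X g"
  shows "uniformly_convergent_on X (\<lambda>n x. f n x - g n x)"
  using assms uniform_limit_minus unfolding uniformly_convergent_on_def by blast

lemma periodic_continuous_bounded:
  fixes f :: "real \<Rightarrow> 'a::real_normed_vector"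
  assumes "continuous_on UNIV f" and per: "\<And>x. f (x + T) = f x" and "0 < T"
  shows "bounded (range f)"
proof -
  interpret periodic_fun_simple f T
    by unfold_locales (rule per)
  have "f x \<in> f ` {0..T}" for x
  proof
    define y where "y = x - of_int \<lfloor>x / T\<rfloor> * T"
    show "f x = f y"
      unfolding y_def by (rule minus_of_int[symmetric])
    have "of_int \<lfloor>x / T\<rfloor> * T \<le> x"
      using mult_right_mono[OF of_int_floor_le[of "x / T"], of T] \<open>0 < T\<close> by simp
    moreover have "x \<le> (of_int \<lfloor>x / T\<rfloor> + 1) * T"
      using mult_right_mono[OF real_of_int_floor_add_one_ge[of "x / T"], of T] \<open>0 < T\<close> by simp
    ultimately show "y \<in> {0..T}"
      by (simp add: y_def algebra_simps)
  qed
  then have "range f = f ` {0..T}"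
    by auto
  moreover have "compact (f ` {0..T})"
    using assms(1) by (intro compact_continuous_image) (auto intro: continuous_on_subset)
  ultimately show ?thesis
    by (simp add: compact_imp_bounded)
qed

lemma uniform_limit_imp_SUP_norm_tendsto_0:
  fixes S :: "nat \<Rightarrow> 'a \<Rightarrow> 'b::real_normed_vector"
  assumes "uniform_limit A S f sequentially" "A \<noteq> {}"
  shows "(\<lambda>n. SUP x\<in>A. norm (f x - S n x)) \<longlonglongrightarrow> 0"
proof (rule LIMSEQ_I)
  fix \<epsilon> :: real
  assume "0 < \<epsilon>"
  then obtain N where N: "\<And>n x. N \<le> n \<Longrightarrow> x \<in> A \<Longrightarrow> norm (f x - S n x) < \<epsilon> / 2"
    using uniform_limitD[OF assms(1), of "\<epsilon> / 2"]
    by (auto simp: eventually_sequentially dist_norm norm_minus_commute)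
  have "norm ((SUP x\<in>A. norm (f x - S n x)) - 0) < \<epsilon>" if "N \<le> n" for n
  proof -
    have bdd: "bdd_above ((\<lambda>x. norm (f x - S n x)) ` A)"
      using N[OF that] by (intro bdd_aboveI2[of _ _ "\<epsilon> / 2"]) (auto intro: less_imp_le)
    obtain x where "x \<in> A" using assms(2) by blast
    have "0 \<le> (SUP x\<in>A. norm (f x - S n x))"
      using cSUP_upper[OF \<open>x \<in> A\<close> bdd] norm_ge_zero order_trans by blast
    moreover have "(SUP x\<in>A. norm (f x - S n x)) \<le> \<epsilon> / 2"
      using N[OF that] assms(2) by (intro cSUP_least) (auto intro: less_imp_le)
    ultimately show ?thesis
      using \<open>0 < \<epsilon>\<close> by simp
  qed
  then show "\<exists>N. \<forall>n\<ge>N. norm ((SUP x\<in>A. norm (f x - S n x)) - 0) < \<epsilon>"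
    by blast
qed

lemma SUP_norm_tendsto_0_imp_uniform_limit:
  fixes S :: "nat \<Rightarrow> 'a \<Rightarrow> 'b::real_normed_vector"
  assumes bdd: "\<And>n. bdd_above ((\<lambda>x. norm (f x - S n x)) ` A)"
    and lim: "(\<lambda>n. SUP x\<in>A. norm (f x - S n x)) \<longlonglongrightarrow> 0"
  shows "uniform_limit A S f sequentially"
proof (rule uniform_limitI)
  fix \<epsilon> :: real
  assume "0 < \<epsilon>"
  then have "\<forall>\<^sub>F n in sequentially. (SUP x\<in>A. norm (f x - S n x)) < \<epsilon>"
    using lim by (auto dest: order_tendstoD(2))
  then show "\<forall>\<^sub>F n in sequentially. \<forall>x\<in>A. dist (S n x) (f x) < \<epsilon>"
  proof eventually_elim
    case (elim n)
    then show ?case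
      using cSUP_upper[OF _ bdd[of n]] by (fastforce simp: dist_norm norm_minus_commute)
  qed
qed

text \<open>Periodicity bounds \<open>f - S n\<close>, so the suprema are genuine: \<open>Sup\<close> of an unbounded set
  of reals is an unspecified value.\<close>
lemma sup_norm_convergence_iff_uniformly_convergent:
  fixes S :: "nat \<Rightarrow> real \<Rightarrow> 'a::banach"
  assumes cont: "\<And>n. continuous_on UNIV (S n)" and per: "\<And>n x. S n (x + T) = S n x" and "0 < T"
  shows "(\<exists>f. continuous_on UNIV f \<and> (\<forall>x. f (x + T) = f x) \<and> (\<forall>x. (\<lambda>n. S n x) \<longlonglongrightarrow> f x) \<and>
            (\<lambda>n. SUP x. norm (f x - S n x)) \<longlonglongrightarrow> 0)
    \<longleftrightarrow> uniformly_convergent_on UNIV S"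
proof
  assume "\<exists>f. continuous_on UNIV f \<and> (\<forall>x. f (x + T) = f x) \<and> (\<forall>x. (\<lambda>n. S n x) \<longlonglongrightarrow> f x) \<and>
            (\<lambda>n. SUP x. norm (f x - S n x)) \<longlonglongrightarrow> 0"
  then obtain f where f: "continuous_on UNIV f" "\<And>x. f (x + T) = f x"
    and lim: "(\<lambda>n. SUP x. norm (f x - S n x)) \<longlonglongrightarrow> 0"
    by blast
  have "bdd_above (range (\<lambda>x. norm (f x - S n x)))" for n
  proof -
    have "bounded (range (\<lambda>x. f x - S n x))"
      using f cont per \<open>0 < T\<close> by (intro periodic_continuous_bounded continuous_on_diff) auto
    then obtain B where "\<And>x. norm (f x - S n x) \<le> B"
      by (auto simp: bounded_iff)
    then show ?thesis
      by (rule bdd_aboveI2)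
  qed
  then show "uniformly_convergent_on UNIV S"
    using lim by (intro uniformly_convergentI SUP_norm_tendsto_0_imp_uniform_limit)
next
  assume "uniformly_convergent_on UNIV S"
  then obtain f where f: "uniform_limit UNIV S f sequentially"
    by (auto simp: uniformly_convergent_on_def)
  have lim: "(\<lambda>n. S n x) \<longlonglongrightarrow> f x" for x
    using f by (rule tendsto_uniform_limitI) simp
  moreover have "f (x + T) = f x" for x
  proof -
    have "(\<lambda>n. S n x) \<longlonglongrightarrow> f (x + T)"
      using lim[of "x + T"] by (simp add: per)
    then show ?thesis
      using lim[of x] by (rule LIMSEQ_unique)
  qed
  moreover have "continuous_on UNIV f"
    using f cont by (intro uniform_limit_theorem[OF _ f]) auto
  ultimately show "\<exists>f. continuous_on UNIV f \<and> (\<forall>x. f (x + T) = f x) \<and> (\<forall>x. (\<lambda>n. S n x) \<longlonglongrightarrow> f x) \<and>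
            (\<lambda>n. SUP x. norm (f x - S n x)) \<longlonglongrightarrow> 0"
    using uniform_limit_imp_SUP_norm_tendsto_0[OF f] by blast
qed

section \<open>Fourier partial sums\<close>

lemma range_cis: "range cis = sphere 0 1"
proof
  show "sphere 0 1 \<subseteq> range cis"
  proof
    fix z :: complex
    assume "z \<in> sphere 0 1"
    then have "z \<noteq> 0" "cmod z = 1"
      by auto
    then have "z = cis (Arg z)"
      by (simp add: cis_Arg sgn_eq)
    then show "z \<in> range cis"
      by (rule range_eqI)
  qed
qed auto

text \<open>At \<open>x = 0\<close> the sine series vanishes, so uniform convergence forces \<open>\<Sum> a k\<close> to converge,
  and the sector condition upgrades this to absolute convergence.\<close>
lemma uniformly_convergent_sector_plus_sine_series_iff:
  fixes a b :: "nat \<Rightarrow> complex"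
  assumes "0 < \<delta>" and sector: "\<forall>k\<ge>1. \<delta> * cmod (a k) \<le> Re (a k)"
  shows "uniformly_convergent_on UNIV
      (\<lambda>m x. \<Sum>k<m. a k * cnj (cis x) ^ k + b k * (cis x ^ k - cnj (cis x) ^ k))
    \<longleftrightarrow> summable (\<lambda>k. cmod (a k)) \<and>
      uniformly_convergent_on (sphere 0 1) (\<lambda>m z. \<Sum>k<m. b k * (z ^ k - cnj z ^ k))"
    (is "uniformly_convergent_on UNIV ?T \<longleftrightarrow> _ \<and> uniformly_convergent_on _ ?B")
proof -
  let ?A = "\<lambda>m x. \<Sum>k<m. a k * cnj (cis x) ^ k"
  have T: "?T = (\<lambda>m x. ?A m x + ?B m (cis x))"
    by (simp add: sum.distrib)
  have A: "uniformly_convergent_on UNIV ?A" if "summable (\<lambda>k. cmod (a k))"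
    using that by (intro Weierstrass_m_test'[of _ _ "\<lambda>k. cmod (a k)"]) (simp_all add: norm_mult norm_power)
  have B: "uniformly_convergent_on UNIV (\<lambda>m x. ?B m (cis x)) \<longleftrightarrow> uniformly_convergent_on (sphere 0 1) ?B"
    using uniformly_convergent_on_image_iff[of cis UNIV ?B] by (simp add: range_cis)
  show ?thesis
  proof
    assume conv: "uniformly_convergent_on UNIV ?T"
    have "convergent (\<lambda>m. \<Sum>k<m. a k)"
      using uniformly_convergent_imp_convergent[OF conv, of 0] by simp
    then have "summable (\<lambda>k. a (Suc k))"
      by (simp only: summable_Suc_iff summable_iff_convergent)
    then have "summable (\<lambda>k. cmod (a (Suc k)))"
      using sector by (intro summable_norm_if_Re_ge[OF \<open>0 < \<delta>\<close>]) auto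
    then have "summable (\<lambda>k. cmod (a k))"
      by (rule summable_Suc_iff[THEN iffD1])
    moreover have "uniformly_convergent_on UNIV (\<lambda>m x. ?T m x - ?A m x)"
      using conv A[OF \<open>summable (\<lambda>k. cmod (a k))\<close>] by (rule uniformly_convergent_on_diff)
    then have "uniformly_convergent_on (sphere 0 1) ?B"
      unfolding B[symmetric] by (simp add: sum.distrib)
    ultimately show "summable (\<lambda>k. cmod (a k)) \<and> uniformly_convergent_on (sphere 0 1) ?B" ..
  next
    assume "summable (\<lambda>k. cmod (a k)) \<and> uniformly_convergent_on (sphere 0 1) ?B"
    then have "uniformly_convergent_on UNIV ?A" "uniformly_convergent_on UNIV (\<lambda>m x. ?B m (cis x))"
      using A B by auto
    then show "uniformly_convergent_on UNIV ?T"
      unfolding T by (rule uniformly_convergent_on_add)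
  qed
qed

lemma exp_of_int_mult_eq_cis_pow:
  "exp (\<i> * of_int (int k) * of_real x) = cis x ^ k"
  "exp (\<i> * of_int (- int k) * of_real x) = cnj (cis x) ^ k"
  unfolding cis_cnj Complex.DeMoivre by (simp_all add: cis_conv_exp mult_ac)

lemma partial_sum_eq:
  "partial_sum c n x = (\<Sum>k<Suc n. (c (int k) + c (- int k)) * cnj (cis x) ^ k
      + c (int k) * (cis x ^ k - cnj (cis x) ^ k)) - c 0"
proof (induction n)
  case 0
  then show ?case by (simp add: partial_sum_def)
next
  case (Suc n)
  have iv: "{- int (Suc n)..int (Suc n)} = insert (- int (Suc n)) (insert (int (Suc n)) {- int n..int n})"
    by auto
  have "partial_sum c (Suc n) x =
      c (- int (Suc n)) * exp (\<i> * of_int (- int (Suc n)) * of_real x)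
      + (c (int (Suc n)) * exp (\<i> * of_int (int (Suc n)) * of_real x) + partial_sum c n x)"
    unfolding partial_sum_def iv by (subst sum.insert; simp)+
  also have "\<dots> = partial_sum c n x
      + c (int (Suc n)) * cis x ^ Suc n + c (- int (Suc n)) * cnj (cis x) ^ Suc n"
    by (simp only: exp_of_int_mult_eq_cis_pow add_ac)
  finally have "partial_sum c (Suc n) x = partial_sum c n x
      + c (int (Suc n)) * cis x ^ Suc n + c (- int (Suc n)) * cnj (cis x) ^ Suc n" .
  with Suc.IH show ?case
    by (simp add: algebra_simps)
qed

lemma continuous_on_partial_sum: "continuous_on UNIV (partial_sum c n)"
  unfolding partial_sum_def by (intro continuous_intros)

lemma partial_sum_periodic: "partial_sum c n (x + 2 * pi) = partial_sum c n x"
proof -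
  have "cis (x + 2 * pi) = cis x"
    by (simp add: complex_eq_iff)
  then show ?thesis
    by (simp add: partial_sum_eq)
qed

theorem theorem2:
  fixes c :: "int \<Rightarrow> complex"
  assumes "\<exists>\<theta>0. 0 \<le> \<theta>0 \<and> \<theta>0 < pi/2 \<and> (\<forall>n::int\<ge>1. c n + c (-n) \<in> sectorM \<theta>0)"
    and "NBVS (\<lambda>n. c (int n))"
  shows "(\<exists>f :: real \<Rightarrow> complex.
            continuous_on UNIV f \<and> (\<forall>x. f (x + 2*pi) = f x) \<and>
            (\<forall>x. (\<lambda>n. partial_sum c n x) \<longlonglongrightarrow> f x) \<and>
            (\<lambda>n. SUP x. cmod (f x - partial_sum c n x)) \<longlonglongrightarrow> 0)
       \<longleftrightarrow> ((\<lambda>n. of_nat n * c (int n)) \<longlonglongrightarrow> 0 \<and>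
            summable (\<lambda>n. cmod (c (int (Suc n)) + c (- int (Suc n)))))"
proof -
  obtain \<theta> where \<theta>: "0 \<le> \<theta>" "\<theta> < pi/2" "\<forall>n::int\<ge>1. c n + c (-n) \<in> sectorM \<theta>"
    using assms(1) by blast
  define a where "a k = c (int k) + c (- int k)" for k :: nat
  have "0 < cos \<theta>"
    using \<theta> by (intro cos_gt_zero_pi) auto
  have "a k \<in> sectorM \<theta>" if "1 \<le> k" for k
    using \<theta>(3) that by (simp add: a_def)
  then have sector: "\<forall>k\<ge>1. cos \<theta> * cmod (a k) \<le> Re (a k)"
    using sectorM_Re_ge[OF \<theta>(1,2)] by blast
  define T where "T = (\<lambda>n x. \<Sum>k<n. a k * cnj (cis x) ^ k + c (int k) * (cis x ^ k - cnj (cis x) ^ k))"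
  have "partial_sum c = (\<lambda>n x. T (Suc n) x - c 0)"
    by (simp add: fun_eq_iff partial_sum_eq T_def a_def del: sum.lessThan_Suc)
  then have "uniformly_convergent_on UNIV (partial_sum c) \<longleftrightarrow> uniformly_convergent_on UNIV T"
    using uniformly_convergent_on_Suc_iff[of UNIV T] by (simp add: uniformly_convergent_on_diff_const_iff)
  also have "\<dots> \<longleftrightarrow> summable (\<lambda>k. cmod (a k)) \<and>
      uniformly_convergent_on (sphere 0 1) (\<lambda>m z. \<Sum>k<m. c (int k) * (z ^ k - cnj z ^ k))"
    unfolding T_def by (rule uniformly_convergent_sector_plus_sine_series_iff[OF \<open>0 < cos \<theta>\<close> sector])
  also have "\<dots> \<longleftrightarrow> (\<lambda>n. of_nat n * c (int n)) \<longlonglongrightarrow> 0 \<and> summable (\<lambda>n. cmod (a (Suc n)))"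
    using NBVS_uniformly_convergent_sine_series_iff[OF assms(2)] summable_Suc_iff[of "\<lambda>k. cmod (a k)"]
    by blast
  finally show ?thesis
    using sup_norm_convergence_iff_uniformly_convergent[OF continuous_on_partial_sum partial_sum_periodic]
    by (simp add: a_def)
qed

end
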